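(* Let $1\le t\le k$ be integers and let $U$ be a $t$-intersecting family of polynomials over $\mathbb{F}_q$ of degree at most $k$. Then distinct members of $U$ have distinct $(k-t+1)$-tuples of coefficients of the monomials $x^t,x^{t+1},\ldots,x^k$; i.e. the map sending a polynomial in $U$ to the tuple of its coefficients of $x^t,\ldots,x^k$ is injective on $U$.
   Context: A set $U$ of polynomials over $\mathbb{F}_q$ is $t$-intersecting if for any two $f_1,f_2\in U$ we have $|\{(x,f_1(x)):x\in\mathbb{F}_q\}\cap\{(x,f_2(x)):x\in\mathbb{F}_q\}|\ge t$. *)

theory Defs
  imports "HOL-Computational_Algebra.Polynomial"
begin

definition poly_graph :: "'a::{field,finite} poly \<Rightarrow> ('a \<times> 'a) set" where
  "poly_graph f = {(x, poly f x) | x. True}"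

definition t_intersecting :: "nat \<Rightarrow> 'a::{field,finite} poly set \<Rightarrow> bool" where
  "t_intersecting t U \<longleftrightarrow>
     (\<forall>f1\<in>U. \<forall>f2\<in>U. f1 \<noteq> f2 \<longrightarrow> card (poly_graph f1 \<inter> poly_graph f2) \<ge> t)"

end

theory Submission
  imports Defs
begin

text \<open>Two graphs meet exactly above the roots of the difference, so distinct members of a
  \<open>t\<close>-intersecting family differ by a nonzero polynomial with at least \<open>t\<close> roots, hence of
  degree at least \<open>t\<close>. If their coefficients of \<open>x\<^sup>t, \<dots>, x\<^sup>k\<close> agreed, the difference would have
  degree below \<open>t\<close>.\<close>

lemma poly_graph_Int_eq_image_roots:
  "poly_graph f \<inter> poly_graph g = (\<lambda>x. (x, poly f x)) ` {x. poly (f - g) x = 0}"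
  by (auto simp: poly_graph_def)

lemma card_poly_graph_Int:
  "card (poly_graph f \<inter> poly_graph g) = card {x. poly (f - g) x = 0}"
  unfolding poly_graph_Int_eq_image_roots by (rule card_image) (simp add: inj_on_def)

lemma card_poly_graph_Int_le_degree_diff:
  assumes "f \<noteq> g"
  shows "card (poly_graph f \<inter> poly_graph g) \<le> degree (f - g)"
  using card_poly_roots_bound[of "f - g"] assms by (simp add: card_poly_graph_Int)

lemma degree_diff_less_if_high_coeffs_eq:
  fixes p q :: "'a::comm_ring poly"
  assumes "0 < t" "degree p \<le> k" "degree q \<le> k"
    and "\<forall>n\<in>{t..k}. coeff p n = coeff q n"
  shows "degree (p - q) < t"
proof -
  have "coeff (p - q) n = 0" if "t \<le> n" for n
  proof (cases "n \<le> k")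
    case True
    then show ?thesis using assms(4) that by simp
  next
    case False
    then show ?thesis using assms(2,3) by (simp add: coeff_eq_0)
  qed
  then have "degree (p - q) \<le> t - 1"
    using assms(1) by (intro degree_le) auto
  then show ?thesis using assms(1) by linarith
qed

theorem lemma4:
  fixes U :: "'a::{field,finite} poly set" and t k :: nat
  assumes "1 \<le> t" and "t \<le> k"
    and "t_intersecting t U"
    and "\<forall>f\<in>U. degree f \<le> k"
  shows "inj_on (\<lambda>f. map (coeff f) [t..<k+1]) U"
proof (rule inj_onI, rule ccontr)
  fix f g
  assume f: "f \<in> U" and g: "g \<in> U" and "f \<noteq> g"
    and "map (coeff f) [t..<k+1] = map (coeff g) [t..<k+1]"
  then have "\<forall>n\<in>{t..k}. coeff f n = coeff g n"
    by (auto simp: map_eq_conv)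
  then have "degree (f - g) < t"
    using assms(1,4) f g by (intro degree_diff_less_if_high_coeffs_eq) auto
  moreover have "t \<le> card (poly_graph f \<inter> poly_graph g)"
    using assms(3) f g \<open>f \<noteq> g\<close> by (simp add: t_intersecting_def)
  ultimately show False
    using card_poly_graph_Int_le_degree_diff[OF \<open>f \<noteq> g\<close>] by linarith
qed

end
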